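(* Let $\tau$ be a set of operation symbols and $X$ a set disjoint from $\tau$. Equip the set $T_\tau(X)$ of $\tau$-hyperterms over $X$ with the constants $\mathsf e_i^{\mathcal T}=\mathsf e_i$ ($i\ge 1$), $\sigma^{\mathcal T}=\sigma(\mathsf e_1,\mathsf e_2,\dots)$ ($\sigma\in\tau$), and operations $q_n^{\mathcal T}$ ($n\ge 0$) defined recursively by: $q_n^{\mathcal T}(\mathsf e_i,t_1,\dots,t_n)=t_i$ for $1\le i\le n$; $q_n^{\mathcal T}(\mathsf e_i,t_1,\dots,t_n)=\mathsf e_i$ for $i>n$; and for $w\in\tau\cup X$, $q_n^{\mathcal T}(w(t_1,\dots,t_k,\mathsf e_{k+1},\mathsf e_{k+2},\dots),\bar u)=w(q_n^{\mathcal T}(t_1,\bar u),\dots,q_n^{\mathcal T}(t_k,\bar u),q_n^{\mathcal T}(\mathsf e_{k+1},\bar u),q_n^{\mathcal T}(\mathsf e_{k+2},\bar u),\dots)$, where $\bar u=u_1,\dots,u_n$. Then $\mathcal T_\tau(X)=(T_\tau(X),q_n^{\mathcal T},\mathsf e_i^{\mathcal T},\sigma^{\mathcal T})$ is a clone $\tau$-algebra, and it is the free clone $\tau$-algebra over the set $X$ of generators (each $x\in X$ identified with $x(\mathsf e_1,\mathsf e_2,\dots)$) in the variety of all clone $\tau$-algebras: for every clone $\tau$-algebra $\mathcal C$ and every map $\alpha:X\to C$ there is a unique homomorphism $\mathcal T_\tau(X)\to\mathcal C$ extending $\alpha$. In particular, for $X=\emptyset$, $\mathcal T_\tau=\mathcal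 T_\tau(\emptyset)$ is initial in the class of clone $\tau$-algebras.
   Context: A clone $\tau$-algebra is an algebra $\mathcal C=(C,q_n^{\mathcal C},\mathsf e_i^{\mathcal C},\sigma^{\mathcal C})_{n\ge 0,i\ge1,\sigma\in\tau}$ where $\mathsf e_i^{\mathcal C},\sigma^{\mathcal C}\in C$ are constants and $q_n^{\mathcal C}$ is an $(n+1)$-ary operation, satisfying the identities: (C1) $q_n(\mathsf e_i,x_1,\dots,x_n)=x_i$ for $1\le i\le n$; (C2) $q_n(\mathsf e_j,x_1,\dots,x_n)=\mathsf e_j$ for $j>n$; (C3) $q_n(x,\mathsf e_1,\dots,\mathsf e_n)=x$; (C4) $q_n(x,y_1,\dots,y_n)=q_k(x,y_1,\dots,y_n,\mathsf e_{n+1},\dots,\mathsf e_k)$ for $k>n$; (C5) $q_n(q_n(x,y_1,\dots,y_n),z_1,\dots,z_n)=q_n(x,q_n(y_1,z_1,\dots,z_n),\dots,q_n(y_n,z_1,\dots,z_n))$. These form a variety. The set $T_\tau(X)$ of $\tau$-hyperterms over $X$ is the least set containing the symbols $\mathsf e_1,\mathsf e_2,\dots$ and containing the formal expression $w(t_1,\dots,t_n,\mathsf e_{n+1},\mathsf e_{n+2},\dots)$ whenever $w\in\tau\cup X$, $n\ge 0$ and $t_1,\dots,t_n\in T_\tau(X)$ (an infinite argument list which is eventually $\mathsf e_{k},\mathsf e_{k+1},\dots$ in positions $k$). *)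

theory Defs
  imports Main
begin

text \<open>The family of operations q_n (n >= 0), each of
arity n+1, is represented by a single function q :: 'a => 'a list => 'a, where
q x [y1,...,yn] stands for q_n(x,y1,...,yn).\<close>

definition clone_alg ::
  "'s set \<Rightarrow> 'a set \<Rightarrow> ('a \<Rightarrow> 'a list \<Rightarrow> 'a) \<Rightarrow> (nat \<Rightarrow> 'a) \<Rightarrow> ('s \<Rightarrow> 'a) \<Rightarrow> bool" where
  "clone_alg tau C q e sg \<longleftrightarrow>
     (\<forall>i\<ge>1. e i \<in> C) \<and> (\<forall>s\<in>tau. sg s \<in> C) \<and>
     (\<forall>x\<in>C. \<forall>ys\<in>lists C. q x ys \<in> C) \<and>
     \<comment> \<open>(C1)\<close>
     (\<forall>xs\<in>lists C. \<forall>i. 1 \<le> i \<and> i \<le> length xs \<longrightarrow> q (e i) xs = xs ! (i - 1)) \<and>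
     \<comment> \<open>(C2)\<close>
     (\<forall>xs\<in>lists C. \<forall>j. j > length xs \<longrightarrow> q (e j) xs = e j) \<and>
     \<comment> \<open>(C3)\<close>
     (\<forall>x\<in>C. \<forall>n. q x (map e [1..<n+1]) = x) \<and>
     \<comment> \<open>(C4)\<close>
     (\<forall>x\<in>C. \<forall>ys\<in>lists C. \<forall>k. k > length ys \<longrightarrow>
        q x ys = q x (ys @ map e [length ys + 1..<k+1])) \<and>
     \<comment> \<open>(C5)\<close>
     (\<forall>x\<in>C. \<forall>ys\<in>lists C. \<forall>zs\<in>lists C. length ys = length zs \<longrightarrow>
        q (q x ys) zs = q x (map (\<lambda>y. q y zs) ys))"

definition clone_hom ::
  "'s set \<Rightarrow> 'a set \<Rightarrow> ('a \<Rightarrow> 'a list \<Rightarrow> 'a) \<Rightarrow> (nat \<Rightarrow> 'a) \<Rightarrow> ('s \<Rightarrow> 'a)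
   \<Rightarrow> 'b set \<Rightarrow> ('b \<Rightarrow> 'b list \<Rightarrow> 'b) \<Rightarrow> (nat \<Rightarrow> 'b) \<Rightarrow> ('s \<Rightarrow> 'b) \<Rightarrow> ('a \<Rightarrow> 'b) \<Rightarrow> bool" where
  "clone_hom tau C q e sg D q' e' sg' h \<longleftrightarrow>
     (\<forall>x\<in>C. h x \<in> D) \<and>
     (\<forall>x\<in>C. \<forall>ys\<in>lists C. h (q x ys) = q' (h x) (map h ys)) \<and>
     (\<forall>i\<ge>1. h (e i) = e' i) \<and>
     (\<forall>s\<in>tau. h (sg s) = sg' s)"

text \<open>Var i (i >= 1) is the symbol e_i. Op w [t1,...,tk] is the hyperterm
w(t1,...,tk,e_{k+1},e_{k+2},...), with w : 's + 'x (Inl = operation symbol, Inr = element of X;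
the sum type makes tau and X disjoint). Since w(t1,...,tk,e_{k+1},...) = w(t1,...,tk,e_{k+1},e_{k+2},...)
as infinite expressions, we use the canonical representative: the list has no trailing entry
Var (its position).\<close>

datatype ('s, 'x) hterm = Var nat | Op "'s + 'x" "('s, 'x) hterm list"

fun hwf :: "'s set \<Rightarrow> 'x set \<Rightarrow> ('s, 'x) hterm \<Rightarrow> bool" where
  "hwf tau X (Var i) \<longleftrightarrow> 1 \<le> i"
| "hwf tau X (Op w ts) \<longleftrightarrow> w \<in> Inl ` tau \<union> Inr ` X \<and> (\<forall>t\<in>set ts. hwf tau X t) \<and>
     (ts \<noteq> [] \<longrightarrow> last ts \<noteq> Var (length ts))"

definition hterms :: "'s set \<Rightarrow> 'x set \<Rightarrow> ('s, 'x) hterm set" where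
  "hterms tau X = {t. hwf tau X t}"

function strip :: "('s, 'x) hterm list \<Rightarrow> ('s, 'x) hterm list" where
  "strip ts = (if ts \<noteq> [] \<and> last ts = Var (length ts) then strip (butlast ts) else ts)"
  by auto
termination by (relation "measure length") auto

declare strip.simps[simp del]

text \<open>q^T: q_n(e_i, u) = u_i (1<=i<=n), = e_i (i>n); and
q_n(w(t1..tk,e_{k+1},...), u) = w(q_n(t1,u),...,q_n(tk,u),q_n(e_{k+1},u),...);
the positions k+1..n give u_{k+1},...,u_n and the positions > n give e_j.\<close>
fun tq :: "('s, 'x) hterm \<Rightarrow> ('s, 'x) hterm list \<Rightarrow> ('s, 'x) hterm" where
  "tq (Var i) us = (if 1 \<le> i \<and> i \<le> length us then us ! (i - 1) else Var i)"
| "tq (Op w ts) us = Op w (strip (map (\<lambda>t. tq t us) ts @ drop (length ts) us))"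

definition te :: "nat \<Rightarrow> ('s, 'x) hterm" where "te i = Var i"

definition tsg :: "'s \<Rightarrow> ('s, 'x) hterm" where "tsg s = Op (Inl s) []"

definition tgen :: "'x \<Rightarrow> ('s, 'x) hterm" where "tgen x = Op (Inr x) []"

end

theory Submission
  imports Defs
begin

text \<open>A hyperterm w(t1,...,tk) is read as w applied to the infinite argument sequence
t1,...,tk,e(k+1),e(k+2),...; stripping trailing padding makes the finite list representing a
sequence unique, and q^T acts entrywise on these sequences, so the clone axioms for hyperterms follow
by structural induction. For freeness, the identity w(t1,...,tk) = q_k(w,t1,...,tk) in the hyperterm
algebra forces a homomorphism to be evaluation. Evaluation is a homomorphism because, by (C4),
q_n(x,y1,...,yn) in any clone algebra also depends only on the sequence y1,...,yn padded with units,
which turns (C5) into the required entrywise composition law.\<close>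

declare upt_Suc[simp del]

subsection \<open>Finite lists as padded infinite sequences\<close>

text \<open>Entries are indexed from 1, like e1, e2, ...; index 0 yields the junk value d 0.\<close>

definition ext_seq :: "(nat \<Rightarrow> 'a) \<Rightarrow> 'a list \<Rightarrow> nat \<Rightarrow> 'a" where
  "ext_seq d L j = (if 1 \<le> j \<and> j \<le> length L then L ! (j - 1) else d j)"

lemma ext_seq_cases: "ext_seq d L j \<in> set L \<or> ext_seq d L j = d j"
  by (auto simp: ext_seq_def)

lemma ext_seq_map: "(\<And>j. f (d j) = d' j) \<Longrightarrow> ext_seq d' (map f L) j = f (ext_seq d L j)"
  by (auto simp: ext_seq_def)

lemma ext_seq_append_defaults: "ext_seq d (L @ map d [Suc (length L)..<Suc N]) = ext_seq d L"
  by (rule ext) (auto simp: ext_seq_def nth_append)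

lemma ext_seq_last: "L \<noteq> [] \<Longrightarrow> ext_seq d L (length L) = last L"
  by (simp add: ext_seq_def last_conv_nth Suc_le_eq)

lemma ext_seq_inject:
  assumes "length L1 = length L2" and "ext_seq d L1 = ext_seq d L2"
  shows "L1 = L2"
proof (rule nth_equalityI)
  fix i assume "i < length L1"
  with assms(1) show "L1 ! i = L2 ! i"
    using fun_cong[OF assms(2), of "Suc i"] by (simp add: ext_seq_def)
qed (fact assms(1))

definition canonical_args :: "('s, 'x) hterm list \<Rightarrow> bool" where
  "canonical_args L \<longleftrightarrow> (L \<noteq> [] \<longrightarrow> last L \<noteq> Var (length L))"

lemma hwf_Op_canonical_args: "hwf tau X (Op w ts) \<Longrightarrow> canonical_args ts"
  by (simp add: canonical_args_def)

lemma canonical_args_inject: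
  assumes "canonical_args L1" "canonical_args L2" "ext_seq Var L1 = ext_seq Var L2"
  shows "L1 = L2"
proof -
  have not_shorter: "\<not> length A < length B"
    if "canonical_args B" "ext_seq Var A = ext_seq Var B" for A B :: "('s, 'x) hterm list"
  proof
    assume less: "length A < length B"
    then have "ext_seq Var A (length B) = Var (length B)" by (simp add: ext_seq_def)
    moreover have "B \<noteq> []" using less by auto
    ultimately show False
      using that ext_seq_last[of B Var] by (simp add: canonical_args_def)
  qed
  have "length L1 = length L2"
    using not_shorter[OF assms(2,3)] not_shorter[OF assms(1) assms(3)[symmetric]] by linarith
  then show ?thesis using assms(3) by (rule ext_seq_inject)
qed

lemma ext_seq_butlast:
  assumes "L \<noteq> []" "last L = Var (length L)"
  shows "ext_seq Var (butlast L) = ext_seq Var L"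
proof
  fix j
  show "ext_seq Var (butlast L) j = ext_seq Var L j"
    using assms by (cases "j = length L") (auto simp: ext_seq_def nth_butlast last_conv_nth)
qed

lemma strip_step: "L \<noteq> [] \<Longrightarrow> last L = Var (length L) \<Longrightarrow> strip L = strip (butlast L)"
  by (subst strip.simps) simp

lemma strip_canonical: "canonical_args L \<Longrightarrow> strip L = L"
  by (subst strip.simps) (auto simp: canonical_args_def)

lemma set_strip_subset: "set (strip L) \<subseteq> set L"
proof (induction L rule: strip.induct)
  case (1 L)
  then show ?case
    by (cases "L \<noteq> [] \<and> last L = Var (length L)")
      (auto simp: strip_step strip_canonical canonical_args_def dest: in_set_butlastD)
qed

lemma canonical_args_strip: "canonical_args (strip L)"
proof (induction L rule: strip.induct)
  case (1 L)
  then show ?case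
    by (cases "L \<noteq> [] \<and> last L = Var (length L)")
      (auto simp: strip_step strip_canonical canonical_args_def)
qed

lemma ext_seq_strip: "ext_seq Var (strip L) = ext_seq Var L"
proof (induction L rule: strip.induct)
  case (1 L)
  then show ?case
    by (cases "L \<noteq> [] \<and> last L = Var (length L)")
      (auto simp: strip_step strip_canonical canonical_args_def ext_seq_butlast)
qed

lemma strip_cong: "ext_seq Var L1 = ext_seq Var L2 \<Longrightarrow> strip L1 = strip L2"
  by (rule canonical_args_inject) (simp_all add: canonical_args_strip ext_seq_strip)

lemma tq_Var: "tq (Var i) us = ext_seq Var us i"
  by (simp add: ext_seq_def)

lemma ext_seq_tq_args:
  "ext_seq Var (map (\<lambda>t. tq t us) ts @ drop (length ts) us) j = tq (ext_seq Var ts j) us"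
  by (auto simp: ext_seq_def nth_append)

lemma tq_Op_strip:
  assumes "\<And>j. ext_seq Var L j = tq (ext_seq Var ts j) us"
  shows "tq (Op w ts) us = Op w (strip L)"
proof -
  have "ext_seq Var (map (\<lambda>t. tq t us) ts @ drop (length ts) us) = ext_seq Var L"
    by (rule ext) (simp only: assms ext_seq_tq_args)
  then have "strip (map (\<lambda>t. tq t us) ts @ drop (length ts) us) = strip L" by (rule strip_cong)
  then show ?thesis by simp
qed

lemma tq_ext_seq_cong: "ext_seq Var us = ext_seq Var vs \<Longrightarrow> tq t us = tq t vs"
proof (induction t)
  case (Var i)
  then show ?case by (simp only: tq_Var)
next
  case (Op w ts)
  have "tq (ext_seq Var ts j) us = tq (ext_seq Var ts j) vs" for j
  proof (cases "ext_seq Var ts j \<in> set ts")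
    case False
    then have "ext_seq Var ts j = Var j" using ext_seq_cases by metis
    with Op.prems show ?thesis by (simp only: tq_Var)
  qed (rule Op.IH[OF _ Op.prems])
  then have "ext_seq Var (map (\<lambda>t. tq t vs) ts @ drop (length ts) vs) j = tq (ext_seq Var ts j) us"
    for j by (simp only: ext_seq_tq_args)
  then have "tq (Op w ts) us = Op w (strip (map (\<lambda>t. tq t vs) ts @ drop (length ts) vs))"
    by (rule tq_Op_strip)
  then show ?case by simp
qed

lemma tq_Nil: "hwf tau X t \<Longrightarrow> tq t [] = t"
proof (induction t)
  case (Op w ts)
  have "map (\<lambda>t. tq t []) ts = ts"
    using Op by (intro map_idI) simp
  moreover have "canonical_args ts" using Op.prems by (rule hwf_Op_canonical_args)
  ultimately show ?case by (simp only: tq.simps drop_Nil append_Nil2 strip_canonical)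
qed simp

lemma tq_unit_args: "hwf tau X t \<Longrightarrow> tq t (map Var [1..<n + 1]) = t"
  using tq_ext_seq_cong[of "map Var [1..<n + 1]" "[]" t] ext_seq_append_defaults[of Var "[]" n]
  by (simp add: tq_Nil)

lemma tq_append_units: "tq t us = tq t (us @ map Var [length us + 1..<k + 1])"
  by (rule tq_ext_seq_cong) (simp add: ext_seq_append_defaults)

lemma tq_tq:
  assumes "length ys = length zs"
  shows "tq (tq t ys) zs = tq t (map (\<lambda>y. tq y zs) ys)"
proof (induction t)
  case (Var i)
  with assms show ?case by auto
next
  case (Op w ts)
  let ?M = "map (\<lambda>t. tq t ys) ts @ drop (length ts) ys"
  let ?N = "map (\<lambda>t. tq t zs) (strip ?M) @ drop (length (strip ?M)) zs"
  have "ext_seq Var ?N j = tq (ext_seq Var ts j) (map (\<lambda>y. tq y zs) ys)" for j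
  proof -
    have "ext_seq Var ?N j = tq (ext_seq Var ?M j) zs"
      by (simp only: ext_seq_tq_args ext_seq_strip)
    also have "\<dots> = tq (tq (ext_seq Var ts j) ys) zs"
      by (simp only: ext_seq_tq_args)
    also have "\<dots> = tq (ext_seq Var ts j) (map (\<lambda>y. tq y zs) ys)"
      using ext_seq_cases[of Var ts j] Op assms by auto
    finally show ?thesis .
  qed
  then have "tq (Op w ts) (map (\<lambda>y. tq y zs) ys) = Op w (strip ?N)" by (rule tq_Op_strip)
  then show ?case by simp
qed

lemma hwf_tq: "hwf tau X t \<Longrightarrow> \<forall>u\<in>set us. hwf tau X u \<Longrightarrow> hwf tau X (tq t us)"
proof (induction t)
  case (Op w ts)
  let ?M = "map (\<lambda>t. tq t us) ts @ drop (length ts) us"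
  have "\<forall>t\<in>set ?M. hwf tau X t" using Op by (auto dest: in_set_dropD)
  then have "\<forall>t\<in>set (strip ?M). hwf tau X t" using set_strip_subset by blast
  with Op.prems canonical_args_strip[of ?M] show ?case by (simp add: canonical_args_def)
qed auto

lemma clone_alg_hterms: "clone_alg tau (hterms tau X) tq te tsg"
  unfolding clone_alg_def hterms_def te_def[abs_def] tsg_def
  by (simp add: hwf_tq tq_tq in_lists_conv_set tq_unit_args[simplified]
      flip: tq_append_units[simplified])

fun eval_hterm :: "('a \<Rightarrow> 'a list \<Rightarrow> 'a) \<Rightarrow> (nat \<Rightarrow> 'a) \<Rightarrow> ('s + 'x \<Rightarrow> 'a) \<Rightarrow> ('s, 'x) hterm \<Rightarrow> 'a"
  where
    "eval_hterm q e v (Var i) = e i"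
  | "eval_hterm q e v (Op w ts) = q (v w) (map (eval_hterm q e v) ts)"

lemma ext_seq_map_eval_hterm:
  "ext_seq e (map (eval_hterm q e v) L) j = eval_hterm q e v (ext_seq Var L j)"
  by (rule ext_seq_map[of "eval_hterm q e v" Var e]) simp

locale clone_algebra =
  fixes tau :: "'s set" and C :: "'a set" and q e sg
  assumes clone_alg: "clone_alg tau C q e sg"
begin

lemma e_closed: "1 \<le> i \<Longrightarrow> e i \<in> C"
  using clone_alg by (simp add: clone_alg_def)

lemma sg_closed: "s \<in> tau \<Longrightarrow> sg s \<in> C"
  using clone_alg by (simp add: clone_alg_def)

lemma q_closed: "x \<in> C \<Longrightarrow> ys \<in> lists C \<Longrightarrow> q x ys \<in> C"
  using clone_alg by (simp add: clone_alg_def)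

lemma q_e_le: "L \<in> lists C \<Longrightarrow> 1 \<le> j \<Longrightarrow> j \<le> length L \<Longrightarrow> q (e j) L = L ! (j - 1)"
  using clone_alg by (simp add: clone_alg_def)

lemma q_e_gt: "L \<in> lists C \<Longrightarrow> j > length L \<Longrightarrow> q (e j) L = e j"
  using clone_alg unfolding clone_alg_def by blast

lemma q_e: "1 \<le> j \<Longrightarrow> L \<in> lists C \<Longrightarrow> q (e j) L = ext_seq e L j"
  by (auto simp: ext_seq_def q_e_le q_e_gt)

lemma q_units: "x \<in> C \<Longrightarrow> q x (map e [1..<n + 1]) = x"
  using clone_alg unfolding clone_alg_def by blast

lemma q_Nil: "x \<in> C \<Longrightarrow> q x [] = x"
  using q_units[of x 0] by simp

lemma q_append_units_less: "x \<in> C \<Longrightarrow> L \<in> lists C \<Longrightarrow> length L < N \<Longrightarrow>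
    q x L = q x (L @ map e [length L + 1..<N + 1])"
  using clone_alg unfolding clone_alg_def by blast

lemma q_append_units:
  "x \<in> C \<Longrightarrow> L \<in> lists C \<Longrightarrow> length L \<le> N \<Longrightarrow> q x (L @ map e [length L + 1..<N + 1]) = q x L"
  using q_append_units_less[of x L N] by (cases "length L = N") simp_all

lemma q_q: "x \<in> C \<Longrightarrow> ys \<in> lists C \<Longrightarrow> zs \<in> lists C \<Longrightarrow> length ys = length zs \<Longrightarrow>
    q (q x ys) zs = q x (map (\<lambda>y. q y zs) ys)"
  using clone_alg unfolding clone_alg_def by blast

lemma q_ext_seq_cong:
  assumes "x \<in> C" "L1 \<in> lists C" "L2 \<in> lists C" "ext_seq e L1 = ext_seq e L2"
  shows "q x L1 = q x L2"
proof -
  define N where "N = max (length L1) (length L2)"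
  have "L1 @ map e [length L1 + 1..<N + 1] = L2 @ map e [length L2 + 1..<N + 1]"
    by (rule ext_seq_inject[where d = e]) (simp_all add: N_def ext_seq_append_defaults assms(4))
  then show ?thesis
    using q_append_units[OF assms(1,2), of N] q_append_units[OF assms(1,3), of N] by (simp add: N_def)
qed

text \<open>(C5) for argument lists of arbitrary lengths, stated entrywise on sequences.\<close>

lemma q_q_ext_seq:
  assumes "x \<in> C" "L \<in> lists C" "M \<in> lists C" "L' \<in> lists C"
    and L': "\<And>j. 1 \<le> j \<Longrightarrow> ext_seq e L' j = q (ext_seq e L j) M"
  shows "q (q x L) M = q x L'"
proof -
  define N where "N = max (length L) (length M)"
  define PL where "PL = L @ map e [length L + 1..<N + 1]"
  define PM where "PM = M @ map e [length M + 1..<N + 1]"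
  have PL: "PL \<in> lists C" "length PL = N" "ext_seq e PL = ext_seq e L"
    using assms(2) e_closed by (auto simp: PL_def N_def ext_seq_append_defaults)
  have PM: "PM \<in> lists C" "length PM = N" "ext_seq e PM = ext_seq e M"
    using assms(3) e_closed by (auto simp: PM_def N_def ext_seq_append_defaults)
  have PLM: "map (\<lambda>p. q p PM) PL \<in> lists C"
    using PL(1) PM(1) q_closed by (induction PL) auto
  have "ext_seq e (map (\<lambda>p. q p PM) PL) j = ext_seq e L' j" for j
  proof (cases "1 \<le> j \<and> j \<le> N")
    case True
    have Lj: "ext_seq e L j \<in> C"
      using ext_seq_cases[of e L j] True assms(2) e_closed by auto
    have "ext_seq e (map (\<lambda>p. q p PM) PL) j = q (ext_seq e PL j) PM"
      using True PL(2) by (cases j) (auto simp: ext_seq_def)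
    also have "\<dots> = q (ext_seq e L j) M"
      using PL(3) q_ext_seq_cong[OF Lj PM(1) assms(3) PM(3)] by simp
    finally show ?thesis using L' True by simp
  next
    case False
    then have "j = 0 \<or> length L < j \<and> length M < j \<and> length PL < j"
      using PL(2) by (auto simp: N_def)
    with assms(3) show ?thesis
      using L'[of j] q_e[of j M] by (auto simp: ext_seq_def)
  qed
  then have "q x (map (\<lambda>p. q p PM) PL) = q x L'"
    using q_ext_seq_cong[OF assms(1) PLM assms(4)] by blast
  moreover have "q (q x L) M = q (q x PL) PM"
    using q_append_units assms q_closed by (simp add: PL_def PM_def N_def)
  ultimately show ?thesis
    using q_q[OF assms(1) PL(1) PM(1)] PL(2) PM(2) by simp
qed

context
  fixes X :: "'x set" and \<alpha> :: "'x \<Rightarrow> 'a"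
  assumes \<alpha>_closed: "\<forall>x\<in>X. \<alpha> x \<in> C"
begin

abbreviation eval :: "('s, 'x) hterm \<Rightarrow> 'a" where
  "eval \<equiv> eval_hterm q e (case_sum sg \<alpha>)"

lemma symbol_closed: "w \<in> Inl ` tau \<union> Inr ` X \<Longrightarrow> case_sum sg \<alpha> w \<in> C"
  using sg_closed \<alpha>_closed by auto

lemma eval_closed: "hwf tau X t \<Longrightarrow> eval t \<in> C"
proof (induction t)
  case (Var i)
  then show ?case by (simp add: e_closed)
next
  case (Op w ts)
  then have "map eval ts \<in> lists C" by auto
  with Op.prems show ?case by (simp add: symbol_closed q_closed)
qed

lemma eval_lists: "\<forall>u\<in>set us. hwf tau X u \<Longrightarrow> map eval us \<in> lists C"
  using eval_closed by auto

lemma eval_tq_Var: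
  assumes "1 \<le> j" "\<forall>u\<in>set us. hwf tau X u"
  shows "eval (tq (Var j) us) = q (e j) (map eval us)"
proof -
  have "q (e j) (map eval us) = ext_seq e (map eval us) j"
    using assms by (simp add: q_e eval_lists)
  then show ?thesis by (simp only: ext_seq_map_eval_hterm tq_Var)
qed

lemma eval_tq: "hwf tau X t \<Longrightarrow> \<forall>u\<in>set us. hwf tau X u \<Longrightarrow> eval (tq t us) = q (eval t) (map eval us)"
proof (induction t)
  case (Var i)
  then show ?case using eval_tq_Var[of i us] by (simp only: hwf.simps eval_hterm.simps)
next
  case (Op w ts)
  let ?M = "map (\<lambda>t. tq t us) ts @ drop (length ts) us"
  have "hwf tau X (Op w (strip ?M))"
    using hwf_tq[OF Op.prems] by simp
  then have "map eval (strip ?M) \<in> lists C"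
    by (simp add: eval_lists)
  moreover have "ext_seq e (map eval (strip ?M)) j = q (ext_seq e (map eval ts) j) (map eval us)"
    if "1 \<le> j" for j
  proof -
    have "ext_seq e (map eval (strip ?M)) j = eval (tq (ext_seq Var ts j) us)"
      by (simp only: ext_seq_map_eval_hterm ext_seq_strip ext_seq_tq_args)
    also have "\<dots> = q (eval (ext_seq Var ts j)) (map eval us)"
    proof (cases "ext_seq Var ts j \<in> set ts")
      case True
      with Op show ?thesis by simp
    next
      case False
      then have "ext_seq Var ts j = Var j" using ext_seq_cases by metis
      then show ?thesis
        using eval_tq_Var[OF that Op.prems(2)] by (simp only: eval_hterm.simps)
    qed
    finally show ?thesis by (simp only: ext_seq_map_eval_hterm)
  qed
  ultimately have "q (q (case_sum sg \<alpha> w) (map eval ts)) (map eval us) =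
      q (case_sum sg \<alpha> w) (map eval (strip ?M))"
    using Op.prems by (intro q_q_ext_seq) (auto simp: symbol_closed eval_lists)
  then show ?case by simp
qed

lemma clone_hom_eval: "clone_hom tau (hterms tau X) tq te tsg C q e sg eval"
  unfolding clone_hom_def hterms_def
proof (intro conjI ballI allI impI)
  fix t ys assume "t \<in> {t. hwf tau X t}" "ys \<in> lists {t. hwf tau X t}"
  then show "eval (tq t ys) = q (eval t) (map eval ys)"
    by (intro eval_tq) auto
qed (simp_all add: eval_closed te_def tsg_def q_Nil sg_closed)

lemma eval_tgen: "x \<in> X \<Longrightarrow> eval (tgen x) = \<alpha> x"
  by (simp add: tgen_def q_Nil \<alpha>_closed)

end

end

text \<open>Uniqueness: a canonical hyperterm w(ts) equals q^T(w(), ts), so a homomorphism is determined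
by its values on the constants and generators.\<close>

lemma clone_hom_eq_eval_hterm:
  assumes hom: "clone_hom tau (hterms tau X) tq te tsg C q e sg h"
    and gen: "\<forall>x\<in>X. h (tgen x) = \<alpha> x"
    and "hwf tau X t"
  shows "h t = eval_hterm q e (case_sum sg \<alpha>) t"
  using assms(3)
proof (induction t)
  case (Var i)
  with hom show ?case by (auto simp: clone_hom_def te_def)
next
  case (Op w ts)
  have w: "w \<in> Inl ` tau \<union> Inr ` X" using Op.prems by simp
  have "canonical_args ts" using Op.prems by (rule hwf_Op_canonical_args)
  then have "Op w ts = tq (Op w []) ts" by (simp add: strip_canonical)
  moreover have "Op w [] \<in> hterms tau X" "ts \<in> lists (hterms tau X)"
    using Op.prems w by (auto simp: hterms_def)
  ultimately have "h (Op w ts) = q (h (Op w [])) (map h ts)"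
    using hom unfolding clone_hom_def by metis
  moreover have "h (Op w []) = case_sum sg \<alpha> w"
    using w hom gen by (auto simp: clone_hom_def tsg_def tgen_def)
  moreover have "map h ts = map (eval_hterm q e (case_sum sg \<alpha>)) ts"
    using Op by auto
  ultimately show ?case by simp
qed

theorem mainTheorem1:
  fixes tau :: "'s set" and X :: "'x set"
  shows "clone_alg tau (hterms tau X) tq te tsg \<and>
    (\<forall>(C :: 'a set) q e sg (\<alpha> :: 'x \<Rightarrow> 'a).
       clone_alg tau C q e sg \<and> (\<forall>x\<in>X. \<alpha> x \<in> C) \<longrightarrow>
       (\<exists>h. clone_hom tau (hterms tau X) tq te tsg C q e sg h \<and> (\<forall>x\<in>X. h (tgen x) = \<alpha> x) \<and>
          (\<forall>h'. clone_hom tau (hterms tau X) tq te tsg C q e sg h' \<and> (\<forall>x\<in>X. h' (tgen x) = \<alpha> x)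
               \<longrightarrow> (\<forall>t\<in>hterms tau X. h' t = h t))))"
proof (intro conjI allI impI)
  show "clone_alg tau (hterms tau X) tq te tsg" by (rule clone_alg_hterms)
next
  fix C :: "'a set" and q e sg and \<alpha> :: "'x \<Rightarrow> 'a"
  assume hyp: "clone_alg tau C q e sg \<and> (\<forall>x\<in>X. \<alpha> x \<in> C)"
  then interpret clone_algebra tau C q e sg
    by unfold_locales simp
  have \<alpha>: "\<forall>x\<in>X. \<alpha> x \<in> C" using hyp by simp
  show "\<exists>h. clone_hom tau (hterms tau X) tq te tsg C q e sg h \<and> (\<forall>x\<in>X. h (tgen x) = \<alpha> x) \<and>
          (\<forall>h'. clone_hom tau (hterms tau X) tq te tsg C q e sg h' \<and> (\<forall>x\<in>X. h' (tgen x) = \<alpha> x)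
               \<longrightarrow> (\<forall>t\<in>hterms tau X. h' t = h t))"
    by (intro exI[of _ "eval_hterm q e (case_sum sg \<alpha>)"] conjI allI impI ballI)
      (use clone_hom_eval[OF \<alpha>] eval_tgen[OF \<alpha>] in
        \<open>auto simp: hterms_def intro: clone_hom_eq_eval_hterm\<close>)
qed

end
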